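(* Let $p\ge1$ and $n\ge2$. Then $\Lambda_pB^n=B^n$.
   Context: $B^n$ is the Euclidean unit ball in $\mathbb{R}^n$, $V$ is volume, and $\omega_s=\pi^{s/2}/\Gamma(1+s/2)$ for $s\ge0$. For $x,y\in\mathbb{R}^n$ let $[x,y]=\sqrt{|x|^2|y|^2-(x\cdot y)^2}$. For a star-shaped set $K$ (in particular a star body) with $V(K)>0$ and $\int_K|y|^p\,dy<\infty$, $\Lambda_pK$ is the convex body with support function $$h_{\Lambda_pK}(x)^p=\frac{1}{\widetilde c_{n,p}V(K)}\int_K[x,y]^p\,dy,\qquad \widetilde c_{n,p}=\frac{(n-1)\omega_{n-1}\omega_{n+p-2}}{(n+p)\omega_n\omega_{n+p-3}}.$$ *)

theory Defs
  imports "HOL-Analysis.Analysis"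
begin

definition omega :: "real \<Rightarrow> real" where
  "omega s = pi powr (s / 2) / Gamma (1 + s / 2)"

definition bracket :: "'a::euclidean_space \<Rightarrow> 'a \<Rightarrow> real" where
  "bracket x y = sqrt ((norm x)\<^sup>2 * (norm y)\<^sup>2 - (x \<bullet> y)\<^sup>2)"

definition c_tilde :: "real \<Rightarrow> real \<Rightarrow> real" where
  "c_tilde n p = ((n - 1) * omega (n - 1) * omega (n + p - 2)) /
                 ((n + p) * omega n * omega (n + p - 3))"

definition Lambda_supp :: "real \<Rightarrow> 'a::euclidean_space set \<Rightarrow> 'a \<Rightarrow> real" where
  "Lambda_supp p K x =
     ((1 / (c_tilde (real DIM('a)) p * measure lebesgue K)) *
        integral K (\<lambda>y. bracket x y powr p)) powr (1 / p)"

text \<open>The convex body with the given support function (intersection of its supporting half-spaces).\<close>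
definition Lambda :: "real \<Rightarrow> 'a::euclidean_space set \<Rightarrow> 'a set" where
  "Lambda p K = {z. \<forall>x. z \<bullet> x \<le> Lambda_supp p K x}"

end

theory Submission
  imports Defs
begin

(*
  The integral I(x) of [x,y]^p over the unit ball is invariant under orthogonal maps
  (Lebesgue measure is, and [Tx,Ty] = [x,y]) and positively homogeneous of degree p in x,
  so I(x) = |x|^p I(e) for a coordinate vector e. For x = e, [e,y] is the norm of the other
  n - 1 coordinates of y. Slicing the ball orthogonally to e into (n-1)-balls of radius
  sqrt (1 - t^2), and computing the p-th moment of the norm over each slice by the layer-cake
  formula, gives I(e) = omega(n-1) (n-1)/(n-1+p) B(1/2, (n+1+p)/2), which equals
  c_tilde(n,p) omega(n) = c_tilde(n,p) V(B^n). Hence the support function of Lambda_p B^n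
  is |x|, the support function of B^n.
*)

section \<open>Lebesgue measure is invariant under orthogonal transformations\<close>

lemma linear_borel_measurable:
  fixes f :: "'a::euclidean_space \<Rightarrow> 'b::real_normed_vector"
  assumes "linear f"
  shows "f \<in> borel_measurable borel"
  using assms
  by (intro borel_measurable_continuous_onI linear_continuous_on
      linear_conv_bounded_linear[THEN iffD1])

(*
  Invariance of Lebesgue measure under orthogonal maps (measure_orthogonal_image) is only
  available on real ^ 'n with a wellordered index type 'n. The space real ^ 'a basis_index is
  an isometric copy of 'a through which it is transported; the order on basis_index is arbitrary.
*)
typedef (overloaded) ('a::euclidean_space) basis_index = "Basis :: 'a set"
  using nonempty_Basis by blast

lemma bij_betw_Rep_basis_index: "bij_betw Rep_basis_index UNIV (Basis :: 'a::euclidean_space set)"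
  by (metis bij_betw_def inj_def Rep_basis_index_inject type_definition.Rep_range
      type_definition_basis_index)

lemma ball_Basis_iff_basis_index:
  "(\<forall>b\<in>(Basis :: 'a::euclidean_space set). P b) \<longleftrightarrow> (\<forall>i. P (Rep_basis_index i))"
  by (metis Rep_basis_index type_definition.Rep_range type_definition_basis_index rangeE)

instance basis_index :: (euclidean_space) finite
  by standard (metis finite_Basis finite_imageI type_definition.Abs_image
      type_definition_basis_index)

instantiation basis_index :: (euclidean_space) wellorder
begin

definition "less_eq_basis_index (i :: 'a basis_index) j \<longleftrightarrow>
  to_nat_on (UNIV :: 'a basis_index set) i \<le> to_nat_on (UNIV :: 'a basis_index set) j"

definition "less_basis_index (i :: 'a basis_index) j \<longleftrightarrow>
  to_nat_on (UNIV :: 'a basis_index set) i < to_nat_on (UNIV :: 'a basis_index set) j"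

instance
proof
  have inj: "inj (to_nat_on (UNIV :: 'a basis_index set))"
    by (simp add: countable_finite inj_on_to_nat_on)
  show "(i :: 'a basis_index) \<le> j \<Longrightarrow> j \<le> i \<Longrightarrow> i = j" for i j
    using inj by (auto simp: less_eq_basis_index_def inj_eq)
  show "P i" if step: "\<And>i :: 'a basis_index. (\<And>j. j < i \<Longrightarrow> P j) \<Longrightarrow> P i" for P i
  proof -
    have "\<forall>i. to_nat_on (UNIV :: 'a basis_index set) i = k \<longrightarrow> P i" for k
      by (induction k rule: less_induct) (metis less_basis_index_def step)
    then show ?thesis by blast
  qed
qed (auto simp: less_eq_basis_index_def less_basis_index_def)

end

definition to_cart :: "'a::euclidean_space \<Rightarrow> real ^ 'a basis_index" where
  "to_cart y = (\<chi> i. y \<bullet> Rep_basis_index i)"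

definition of_cart :: "real ^ 'a basis_index \<Rightarrow> 'a::euclidean_space" where
  "of_cart v = (\<Sum>i\<in>UNIV. v $ i *\<^sub>R Rep_basis_index i)"

lemma of_cart_inner_Rep_basis_index [simp]: "of_cart v \<bullet> Rep_basis_index j = v $ j"
proof -
  have "of_cart v \<bullet> Rep_basis_index j = (\<Sum>i\<in>UNIV. v $ i * (Rep_basis_index i \<bullet> Rep_basis_index j))"
    by (simp add: of_cart_def inner_sum_left)
  also have "\<dots> = (\<Sum>i\<in>UNIV. if i = j then v $ i else 0)"
    by (intro sum.cong refl) (auto simp: inner_Basis Rep_basis_index Rep_basis_index_inject)
  finally show ?thesis by simp
qed

lemma of_cart_to_cart [simp]: "of_cart (to_cart y) = y"
proof -
  have "of_cart (to_cart y) = (\<Sum>b\<in>Basis. (y \<bullet> b) *\<^sub>R b)"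
    unfolding of_cart_def to_cart_def
    using sum.reindex_bij_betw[OF bij_betw_Rep_basis_index, of "\<lambda>b. (y \<bullet> b) *\<^sub>R b"] by simp
  then show ?thesis by (simp add: euclidean_representation)
qed

lemma linear_of_cart: "linear of_cart"
  by (auto simp: linear_iff of_cart_def scaleR_add_left sum.distrib scaleR_sum_right)

lemma linear_to_cart: "linear to_cart"
  by (auto simp: linear_iff to_cart_def vec_eq_iff inner_add_left)

lemma inner_of_cart: "of_cart v \<bullet> of_cart w = v \<bullet> w"
  by (simp add: of_cart_def[of v] inner_sum_left inner_commute[of "Rep_basis_index _"]
      inner_vec_def)

lemma inner_to_cart: "to_cart y \<bullet> to_cart z = y \<bullet> z"
  by (metis inner_of_cart of_cart_to_cart)

lemma prod_Basis_vec: "(\<Prod>b\<in>(Basis :: (real ^ 'n) set). f b) = (\<Prod>i\<in>UNIV. f (axis i 1))"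
  by (simp add: Basis_vec_def UNION_singleton_eq_range prod.reindex inj_def axis_eq_axis)

lemma lborel_distr_of_cart: "distr lborel borel of_cart = (lborel :: 'a::euclidean_space measure)"
proof (rule lborel_eqI[symmetric])
  have [measurable]: "of_cart \<in> borel_measurable borel"
    by (rule linear_borel_measurable[OF linear_of_cart])
  fix l u :: 'a
  assume "\<And>b. b \<in> Basis \<Longrightarrow> l \<bullet> b \<le> u \<bullet> b"
  then have le: "\<forall>b\<in>Basis. to_cart l \<bullet> b \<le> to_cart u \<bullet> b"
    by (auto simp: Basis_vec_def inner_axis to_cart_def Rep_basis_index)
  have "of_cart -` box l u = box (to_cart l) (to_cart u)"
    by (simp add: set_eq_iff mem_box_cart) (simp add: mem_box ball_Basis_iff_basis_index
        to_cart_def)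
  then have "emeasure (distr lborel borel of_cart) (box l u) =
      emeasure lborel (box (to_cart l) (to_cart u))"
    by (simp add: emeasure_distr)
  also have "\<dots> = (\<Prod>i\<in>UNIV. (u - l) \<bullet> Rep_basis_index i)"
    using le by (simp add: emeasure_lborel_box_eq prod_Basis_vec inner_axis to_cart_def
        inner_diff_left)
  also have "\<dots> = (\<Prod>b\<in>Basis. (u - l) \<bullet> b)"
    by (simp add: prod.reindex_bij_betw[OF bij_betw_Rep_basis_index])
  finally show "emeasure (distr lborel borel of_cart) (box l u) = (\<Prod>b\<in>Basis. (u - l) \<bullet> b)" .
qed simp

lemma lborel_distr_orthogonal_transformation_cart:
  fixes T :: "real ^ 'n::{finite,wellorder} \<Rightarrow> real ^ 'n::{finite,wellorder}"
  assumes T: "orthogonal_transformation T"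
  shows "distr lborel borel T = lborel"
proof (rule lborel_eqI[symmetric])
  have T_meas [measurable]: "T \<in> borel_measurable borel"
    using T orthogonal_transformation_linear linear_borel_measurable by blast
  have inv: "orthogonal_transformation (inv T)"
    using T orthogonal_transformation_inv by blast
  fix l u :: "real ^ 'n::{finite,wellorder}"
  assume "\<And>b. b \<in> Basis \<Longrightarrow> l \<bullet> b \<le> u \<bullet> b"
  have "emeasure (distr lborel borel T) (box l u) = emeasure lborel (T -` box l u)"
    by (subst emeasure_distr) auto
  also have "\<dots> = emeasure lebesgue (inv T ` box l u)"
  proof -
    have "T -` box l u = inv T ` box l u"
      using T orthogonal_transformation_bij bij_vimage_eq_inv_image by blast
    moreover have "T -` box l u \<in> sets borel"
      using measurable_sets[OF T_meas, of "box l u"] by simp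
    ultimately show ?thesis by simp
  qed
  also have "\<dots> = emeasure lebesgue (box l u)"
    by (simp add: emeasure_eq_measure2 measurable_orthogonal_image[OF inv]
        measure_orthogonal_image[OF inv])
  also have "\<dots> = (\<Prod>b\<in>Basis. (u - l) \<bullet> b)"
    using \<open>\<And>b. b \<in> Basis \<Longrightarrow> l \<bullet> b \<le> u \<bullet> b\<close> by (simp add: emeasure_lborel_box_eq)
  finally show "emeasure (distr lborel borel T) (box l u) = (\<Prod>b\<in>Basis. (u - l) \<bullet> b)" .
qed simp

lemma lborel_distr_orthogonal_transformation:
  fixes T :: "'a::euclidean_space \<Rightarrow> 'a"
  assumes T: "orthogonal_transformation T"
  shows "distr lborel borel T = lborel"
proof -
  define T' :: "real ^ 'a basis_index \<Rightarrow> real ^ 'a basis_index" where "T' = to_cart \<circ> T \<circ> of_cart"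
  have T': "orthogonal_transformation T'"
    using T unfolding orthogonal_transformation_def T'_def
    by (simp add: linear_compose linear_to_cart linear_of_cart inner_to_cart inner_of_cart)
  have [measurable]: "T \<in> borel_measurable borel" "T' \<in> borel_measurable borel"
    "of_cart \<in> borel_measurable borel"
    using T T' orthogonal_transformation_linear linear_borel_measurable linear_of_cart by blast+
  have "distr lborel borel T = distr (distr lborel borel of_cart) borel T"
    by (simp add: lborel_distr_of_cart)
  also have "\<dots> = distr lborel borel (of_cart \<circ> T')"
    by (simp add: distr_distr T'_def o_def)
  also have "\<dots> = distr (distr lborel borel T') borel of_cart"
    by (simp add: distr_distr)
  also have "\<dots> = lborel"
    by (simp add: lborel_distr_orthogonal_transformation_cart[OF T'] lborel_distr_of_cart)
  finally show ?thesis .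
qed

lemma orthogonal_transformation_exists_unit:
  fixes a b :: "'a::real_inner"
  assumes a: "norm a = 1" and b: "norm b = 1"
  obtains T where "orthogonal_transformation T" "T a = b"
proof (cases "a = b")
  case True
  then show ?thesis using that[of "\<lambda>y. y"] by simp
next
  case False
  define w where "w = b - a"
  have w0: "w \<bullet> w \<noteq> 0" using False by (simp add: w_def)
  define T where "T = (\<lambda>y. y - (2 * (w \<bullet> y) / (w \<bullet> w)) *\<^sub>R w)"
  have "orthogonal_transformation T"
    unfolding orthogonal_transformation_def
  proof (intro conjI allI)
    show "linear T" unfolding T_def
      by (auto simp: linear_iff inner_add_right scaleR_add_left add_divide_distrib algebra_simps)
    show "T v \<bullet> T u = v \<bullet> u" for v u
      using w0 by (simp add: T_def inner_diff_left inner_diff_right inner_commute field_simps)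
  qed
  moreover have "T a = b"
  proof -
    have "a \<bullet> a = 1" "b \<bullet> b = 1" using a b by (simp_all add: norm_eq_1)
    then have "2 * (w \<bullet> a) = - (w \<bullet> w)"
      by (simp add: w_def inner_diff_left inner_diff_right inner_commute)
    then have "2 * (w \<bullet> a) / (w \<bullet> w) = -1" using w0 by simp
    then show ?thesis by (simp add: T_def w_def)
  qed
  ultimately show ?thesis using that by blast
qed

section \<open>Moments of the norm over Euclidean balls\<close>

lemma nn_integral_open_interval_has_integral:
  fixes f :: "real \<Rightarrow> real"
  assumes "\<And>t. t \<in> {a..b} \<Longrightarrow> 0 \<le> f t" and "(f has_integral I) {a..b}"
  shows "(\<integral>\<^sup>+ t. indicator {a<..<b} t * ennreal (f t) \<partial>lborel) = ennreal I"
proof -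
  have "AE t in lborel. t \<notin> {a, b}"
    by (intro AE_not_in countable_imp_null_set_lborel) auto
  then have "AE t in lborel.
      indicator {a<..<b} t * ennreal (f t) = ennreal (f t) * indicator {a..b} t"
    by eventually_elim (auto simp: indicator_def)
  then have "(\<integral>\<^sup>+ t. indicator {a<..<b} t * ennreal (f t) \<partial>lborel) =
      (\<integral>\<^sup>+ t. ennreal (f t) * indicator {a..b} t \<partial>lborel)"
    by (rule nn_integral_cong_AE)
  also have "\<dots> = ennreal I"
    using nn_integral_has_integral_lebesgue'[OF assms] .
  finally show ?thesis .
qed

lemma ennreal_powr_eq_nn_integral:
  assumes q: "q > 0" and z: "z \<ge> 0"
  shows "ennreal (z powr q) = (\<integral>\<^sup>+ t. indicator {0<..<z} t * ennreal (q * t powr (q - 1)) \<partial>lborel)"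
proof -
  have "((\<lambda>t. q * t powr (q - 1)) has_integral (z powr q - 0 powr q)) {0..z}"
  proof (rule fundamental_theorem_of_calculus_interior)
    show "continuous_on {0..z} (\<lambda>t. t powr q)"
      using q by (intro continuous_on_powr') (auto intro: continuous_intros)
    show "((\<lambda>t. t powr q) has_vector_derivative q * x powr (q - 1)) (at x)" if "x \<in> {0<..<z}" for x
      using that has_real_derivative_powr[of x q]
      by (simp add: has_real_derivative_iff_has_vector_derivative)
  qed (use z in auto)
  then show ?thesis
    using q by (subst nn_integral_open_interval_has_integral) auto
qed

lemma nn_integral_powr_shell:
  fixes m :: nat and q r :: real
  assumes r: "r > 0" and q: "q > 0"
  shows "(\<integral>\<^sup>+ t. indicator {0<..<r} t * ennreal (q * t powr (q - 1) * (r ^ m - t ^ m)) \<partial>lborel)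
     = ennreal (m / (m + q) * r powr (m + q))"
proof -
  define F where "F = (\<lambda>t. r ^ m * t powr q - q / (m + q) * t powr (m + q))"
  have mq: "m + q > 0" using q by linarith
  have "((\<lambda>t. q * t powr (q - 1) * (r ^ m - t ^ m)) has_integral (F r - F 0)) {0..r}"
  proof (rule fundamental_theorem_of_calculus_interior)
    show "continuous_on {0..r} F"
      unfolding F_def using q mq by (intro continuous_intros continuous_on_powr') auto
    fix x assume x: "x \<in> {0<..<r}"
    have "(F has_real_derivative
        r ^ m * (q * x powr (q - 1)) - q / (m + q) * ((m + q) * x powr (m + q - 1))) (at x)"
      unfolding F_def using x by (intro DERIV_diff DERIV_cmult has_real_derivative_powr) auto
    moreover have "r ^ m * (q * x powr (q - 1)) - q / (m + q) * ((m + q) * x powr (m + q - 1)) =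
        q * x powr (q - 1) * (r ^ m - x ^ m)"
    proof -
      have "x powr (m + q - 1) = x powr (q - 1) * x ^ m"
        using x by (simp add: powr_add[symmetric] powr_realpow[symmetric] algebra_simps)
      then show ?thesis using mq by (simp add: field_simps)
    qed
    ultimately show "(F has_vector_derivative q * x powr (q - 1) * (r ^ m - x ^ m)) (at x)"
      by (simp add: has_real_derivative_iff_has_vector_derivative)
  qed (use r in auto)
  moreover have "F r - F 0 = m / (m + q) * r powr (m + q)"
    using r mq q by (simp add: F_def powr_add powr_realpow field_simps)
  moreover have "0 \<le> q * t powr (q - 1) * (r ^ m - t ^ m)" if "t \<in> {0..r}" for t
    using that q by (auto intro!: mult_nonneg_nonneg power_mono)
  ultimately show ?thesis
    by (subst nn_integral_open_interval_has_integral) auto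
qed

lemma nn_integral_indicator_powr_one_minus_square:
  assumes a: "a \<ge> 0"
  shows "(\<integral>\<^sup>+x. indicator {-1..1} x * ennreal ((1 - x\<^sup>2) powr a) \<partial>lborel) =
    ennreal (Beta (1 / 2) (a + 1))"
proof -
  define f where "f = (\<lambda>x::real. (1 - x\<^sup>2) powr a)"
  define I where "I = (\<integral>\<^sup>+ x. ennreal (f x * indicator {0..1} x) \<partial>lborel)"
  have "((\<lambda>t. t powr (-1 / 2) * (1 - t) powr a) has_integral Beta (1 / 2) (a + 1)) {0..1}"
    using has_integral_Beta_real[of "1/2" "a + 1"] a by simp
  from nn_integral_has_integral_lebesgue[OF _ this] have
    "ennreal (Beta (1 / 2) (a + 1)) =
       (\<integral>\<^sup>+ t. ennreal (t powr (-1 / 2) * (1 - t) powr a * indicator {0^2..1^2} t) \<partial>lborel)"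
    by (simp add: mult_ac ennreal_mult' ennreal_indicator)
  also have "\<dots> = (\<integral>\<^sup>+ x. ennreal (x\<^sup>2 powr - (1 / 2) * (1 - x\<^sup>2) powr a * (2 * x) *
                          indicator {0..1} x) \<partial>lborel)"
    by (subst nn_integral_substitution[where g = "\<lambda>x. x ^ 2" and g' = "\<lambda>x. 2 * x"])
       (auto intro!: derivative_eq_intros continuous_intros simp: set_borel_measurable_def)
  also have "\<dots> = (\<integral>\<^sup>+ x. 2 * ennreal (f x * indicator {0..1} x) \<partial>lborel)"
    by (intro nn_integral_cong_AE AE_I[of _ _ "{0}"])
       (auto simp: f_def indicator_def powr_minus powr_half_sqrt field_split_simps ennreal_mult')
  also have "\<dots> = I + I"
    by (simp add: I_def f_def mult_2 nn_integral_add)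
  finally have Beta: "ennreal (Beta (1 / 2) (a + 1)) = I + I" .
  have "I = (\<integral>\<^sup>+ x. ennreal (f x * indicator {-1..0} x) \<partial>lborel)"
    unfolding I_def by (subst nn_integral_real_affine[of _ "-1" 0])
      (auto simp: f_def indicator_def intro!: nn_integral_cong)
  then have "I + I = (\<integral>\<^sup>+ x. ennreal (f x * indicator {-1..0} x) \<partial>lborel) + I"
    by simp
  also have "\<dots> = (\<integral>\<^sup>+ x. ennreal (f x * (indicator {-1..0} x + indicator {0..1} x)) \<partial>lborel)"
    unfolding I_def f_def by (subst nn_integral_add[symmetric]) (auto simp: algebra_simps)
  also have "\<dots> = (\<integral>\<^sup>+x. indicator {-1..1} x * ennreal (f x) \<partial>lborel)"
    by (intro nn_integral_cong_AE AE_I[of _ _ "{0}"]) (auto simp: indicator_def)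
  finally show ?thesis by (simp add: f_def Beta)
qed

lemma borel_measurable_L2_set:
  assumes "A \<subseteq> I"
  shows "(\<lambda>f. L2_set f A) \<in> borel_measurable (Pi\<^sub>M I (\<lambda>_. lborel :: real measure))"
  using assms unfolding L2_set_def
  by (intro measurable_compose[OF _ borel_measurable_sqrt] borel_measurable_sum
      borel_measurable_power) auto

declare borel_measurable_L2_set[OF order_refl, measurable]

lemma emeasure_PiM_L2_set_shell:
  fixes A :: "'i set" and r t :: real
  assumes A: "finite A" and t: "0 < t" "t \<le> r"
  defines "M \<equiv> Pi\<^sub>M A (\<lambda>_. lborel :: real measure)"
  shows "emeasure M ({f. t < L2_set f A \<and> L2_set f A \<le> r} \<inter> space M) =
    ennreal (unit_ball_vol (card A) * (r ^ card A - t ^ card A))"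
proof -
  have cball: "emeasure M ({f. L2_set f A \<le> s} \<inter> space M) =
      ennreal (unit_ball_vol (card A) * s ^ card A)"
    if "s > 0" for s
    using emeasure_cball_aux[OF A that] by (simp add: M_def L2_set_def)
  have sets: "{f. L2_set f A \<le> s} \<inter> space M \<in> sets M" for s
    unfolding M_def by measurable
  have "{f. t < L2_set f A \<and> L2_set f A \<le> r} \<inter> space M =
      ({f. L2_set f A \<le> r} \<inter> space M) - ({f. L2_set f A \<le> t} \<inter> space M)"
    by auto
  also have "emeasure M \<dots> =
      emeasure M ({f. L2_set f A \<le> r} \<inter> space M) - emeasure M ({f. L2_set f A \<le> t} \<inter> space M)"
    using t by (intro emeasure_Diff) (auto simp: cball sets)
  also have "\<dots> = ennreal (unit_ball_vol (card A) * (r ^ card A - t ^ card A))"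
    using t by (simp add: cball ennreal_minus[symmetric] right_diff_distrib power_mono)
  finally show ?thesis .
qed

lemma nn_integral_PiM_cball_indicator_shell:
  fixes A :: "'i set" and r t :: real and c :: ennreal
  assumes A: "finite A"
  shows "(\<integral>\<^sup>+ f. indicator {f. L2_set f A \<le> r} f * indicator {0<..<L2_set f A} t * c
      \<partial>Pi\<^sub>M A (\<lambda>_. lborel)) =
    indicator {0<..<r} t * ennreal (unit_ball_vol (card A) * (r ^ card A - t ^ card A)) * c"
proof (cases "0 < t \<and> t < r")
  case True
  let ?M = "Pi\<^sub>M A (\<lambda>_. lborel :: real measure)"
  have "(\<integral>\<^sup>+ f. indicator {f. L2_set f A \<le> r} f * indicator {0<..<L2_set f A} t * c \<partial>?M) =
      (\<integral>\<^sup>+ f. c * indicator ({f. t < L2_set f A \<and> L2_set f A \<le> r} \<inter> space ?M) f \<partial>?M)"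
    using True by (intro nn_integral_cong) (auto simp: indicator_def)
  also have "\<dots> = c * ennreal (unit_ball_vol (card A) * (r ^ card A - t ^ card A))"
    using True by (simp add: nn_integral_cmult_indicator emeasure_PiM_L2_set_shell[OF A])
  finally show ?thesis
    using True by (simp add: mult.commute)
next
  case False
  then have zero:
      "indicator {f. L2_set f A \<le> r} f * indicator {0<..<L2_set f A} t * c = (0::ennreal)" for f
    by (auto simp: indicator_def)
  show ?thesis
    using False by (simp only: zero) (simp add: indicator_def)
qed

(*
  Layer cake: s^q is the integral of q t^(q-1) over 0 < t < s, and Fubini turns the moment
  into an integral of the volumes of spherical shells.
*)
lemma nn_integral_PiM_cball_L2_set_powr:
  fixes A :: "'i set" and q r :: real
  assumes A: "finite A" and q: "q > 0" and r: "r > 0"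
  shows "(\<integral>\<^sup>+ f. indicator {f. L2_set f A \<le> r} f * ennreal (L2_set f A powr q)
      \<partial>Pi\<^sub>M A (\<lambda>_. lborel)) =
    ennreal (unit_ball_vol (card A) * (card A / (card A + q)) * r powr (card A + q))"
proof -
  interpret product_sigma_finite "\<lambda>_::'i. lborel :: real measure" by standard
  define M where "M = Pi\<^sub>M A (\<lambda>_. lborel :: real measure)"
  interpret M: sigma_finite_measure M
    unfolding M_def using A by (rule sigma_finite)
  interpret pair_sigma_finite M "lborel :: real measure" ..
  define V where "V = unit_ball_vol (card A)"
  define c where "c = (\<lambda>t::real. ennreal (q * t powr (q - 1)))"
  have "(\<integral>\<^sup>+ f. indicator {f. L2_set f A \<le> r} f * ennreal (L2_set f A powr q) \<partial>M) =
      (\<integral>\<^sup>+ f. \<integral>\<^sup>+ t. indicator {f. L2_set f A \<le> r} f * indicator {0<..<L2_set f A} t * c t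
        \<partial>lborel \<partial>M)"
    by (intro nn_integral_cong)
      (simp add: ennreal_powr_eq_nn_integral[OF q] nn_integral_cmult c_def mult.assoc)
  also have "\<dots> = (\<integral>\<^sup>+ t. \<integral>\<^sup>+ f.
      indicator {f. L2_set f A \<le> r} f * indicator {0<..<L2_set f A} t * c t \<partial>M \<partial>lborel)"
  proof (rule Fubini'[symmetric])
    have "(\<lambda>(f, t). indicator {f. L2_set f A \<le> r} f * indicator {0<..<L2_set f A} t * c t) =
        (\<lambda>x. if L2_set (fst x) A \<le> r \<and> 0 < snd x \<and> snd x < L2_set (fst x) A
             then ennreal (q * snd x powr (q - 1)) else 0)"
      by (auto simp: indicator_def fun_eq_iff c_def)
    also have "\<dots> \<in> borel_measurable (M \<Otimes>\<^sub>M lborel)"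
      unfolding M_def by measurable
    finally show "(\<lambda>(f, t). indicator {f. L2_set f A \<le> r} f * indicator {0<..<L2_set f A} t * c t)
        \<in> borel_measurable (M \<Otimes>\<^sub>M lborel)" .
  qed
  also have "\<dots> = (\<integral>\<^sup>+ t. ennreal V *
      (indicator {0<..<r} t * ennreal (q * t powr (q - 1) * (r ^ card A - t ^ card A))) \<partial>lborel)"
    using q by (intro nn_integral_cong)
      (simp only: M_def nn_integral_PiM_cball_indicator_shell[OF A],
        simp add: V_def c_def indicator_def ennreal_mult'[symmetric] mult_ac)
  also have "\<dots> = ennreal V * ennreal (card A / (card A + q) * r powr (card A + q))"
    using nn_integral_powr_shell[OF r q, of "card A"] by (subst nn_integral_cmult) auto
  also have "\<dots> = ennreal (V * (card A / (card A + q) * r powr (card A + q)))"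
    by (subst ennreal_mult') (auto simp: V_def)
  finally show ?thesis
    by (simp add: M_def V_def mult_ac)
qed

lemma sqrt_add_square_le_1_iff:
  fixes s y :: real
  assumes "s \<ge> 0"
  shows "sqrt (y\<^sup>2 + s\<^sup>2) \<le> 1 \<longleftrightarrow> y \<in> {-1..1} \<and> s \<le> sqrt (1 - y\<^sup>2)"
proof -
  have "sqrt (y\<^sup>2 + s\<^sup>2) \<le> 1 \<longleftrightarrow> y\<^sup>2 \<le> 1 \<and> s\<^sup>2 \<le> 1 - y\<^sup>2"
    by (smt (verit) real_sqrt_le_1_iff zero_le_power2)
  moreover have "s\<^sup>2 \<le> 1 - y\<^sup>2 \<longleftrightarrow> s \<le> sqrt (1 - y\<^sup>2)" if "y\<^sup>2 \<le> 1"
    using assms that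
    by (metis diff_ge_0_iff_ge real_le_lsqrt real_le_rsqrt real_sqrt_ge_zero real_sqrt_pow2 power_mono)
  moreover have "y\<^sup>2 \<le> 1 \<longleftrightarrow> y \<in> {-1..1}"
    by (auto simp: abs_square_le_1 abs_le_iff)
  ultimately show ?thesis
    by blast
qed

lemma L2_set_fun_upd_insert_le_1_iff:
  assumes A: "finite A" and i: "i \<notin> A"
  shows "L2_set (x(i := y)) (insert i A) \<le> 1 \<longleftrightarrow> y \<in> {-1..1} \<and> L2_set x A \<le> sqrt (1 - y\<^sup>2)"
proof -
  have "L2_set (x(i := y)) A = L2_set x A"
    using i by (intro L2_set_cong) auto
  then have "L2_set (x(i := y)) (insert i A) = sqrt (y\<^sup>2 + (L2_set x A)\<^sup>2)"
    using A i by simp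
  then show ?thesis
    using sqrt_add_square_le_1_iff[OF L2_set_nonneg, of y x A] by simp
qed

lemma nn_integral_PiM_cball_L2_set_slice:
  fixes A :: "'i set" and p y :: real
  assumes A: "finite A" and i: "i \<notin> A" and p: "p > 0" and y: "\<bar>y\<bar> \<noteq> 1"
  shows "(\<integral>\<^sup>+ x. indicator {f. L2_set f (insert i A) \<le> 1} (x(i := y)) *
      ennreal (L2_set (x(i := y)) A powr p) \<partial>Pi\<^sub>M A (\<lambda>_. lborel)) =
    indicator {-1..1} y * ennreal (unit_ball_vol (card A) * (card A / (card A + p)) *
      (1 - y\<^sup>2) powr ((card A + p) / 2))"
proof -
  have "L2_set (x(i := y)) A = L2_set x A" for x :: "'i \<Rightarrow> real"
    using i by (intro L2_set_cong) auto
  then have "(\<integral>\<^sup>+ x. indicator {f. L2_set f (insert i A) \<le> 1} (x(i := y)) *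
      ennreal (L2_set (x(i := y)) A powr p) \<partial>Pi\<^sub>M A (\<lambda>_. lborel)) =
    indicator {-1..1} y * (\<integral>\<^sup>+ x. indicator {f. L2_set f A \<le> sqrt (1 - y\<^sup>2)} x *
      ennreal (L2_set x A powr p) \<partial>Pi\<^sub>M A (\<lambda>_. lborel))"
    by (subst nn_integral_cmult[symmetric])
      (auto simp: L2_set_fun_upd_insert_le_1_iff[OF A i] indicator_def intro!: nn_integral_cong)
  also have "\<dots> = indicator {-1..1} y * ennreal (unit_ball_vol (card A) * (card A / (card A + p)) *
      (1 - y\<^sup>2) powr ((card A + p) / 2))"
  proof (cases "\<bar>y\<bar> < 1")
    case True
    then have "1 - y\<^sup>2 > 0"
      by (simp add: abs_square_less_1)
    then have "sqrt (1 - y\<^sup>2) powr (card A + p) = (1 - y\<^sup>2) powr ((card A + p) / 2)"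
      by (simp add: powr_half_sqrt[symmetric] powr_powr)
    then show ?thesis
      using nn_integral_PiM_cball_L2_set_powr[OF A p, of "sqrt (1 - y\<^sup>2)"] \<open>1 - y\<^sup>2 > 0\<close> by simp
  next
    case False
    then have "y \<notin> {-1..1}"
      using y by auto
    then show ?thesis
      by simp
  qed
  finally show ?thesis .
qed

lemma nn_integral_PiM_cball_L2_set_powr_insert:
  fixes A :: "'i set" and p :: real
  assumes A: "finite A" and i: "i \<notin> A" and p: "p > 0"
  shows "(\<integral>\<^sup>+ f. indicator {f. L2_set f (insert i A) \<le> 1} f * ennreal (L2_set f A powr p)
      \<partial>Pi\<^sub>M (insert i A) (\<lambda>_. lborel)) =
    ennreal (unit_ball_vol (card A) * (card A / (card A + p)) * Beta (1/2) ((card A + p) / 2 + 1))"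
proof -
  interpret product_sigma_finite "\<lambda>_::'i. lborel :: real measure" by standard
  note [measurable] = borel_measurable_L2_set[OF subset_insertI, of A i]
  define C where "C = unit_ball_vol (card A) * (card A / (card A + p))"
  have C: "C \<ge> 0" using p by (simp add: C_def)
  have "AE y in lborel. y \<notin> {-1, 1}"
    by (intro AE_not_in countable_imp_null_set_lborel) auto
  then have "AE y in lborel.
      (\<integral>\<^sup>+ x. indicator {f. L2_set f (insert i A) \<le> 1} (x(i := y)) *
          ennreal (L2_set (x(i := y)) A powr p)
        \<partial>Pi\<^sub>M A (\<lambda>_. lborel)) =
      indicator {-1..1} y * ennreal (C * (1 - y\<^sup>2) powr ((card A + p) / 2))"
    by eventually_elim (use nn_integral_PiM_cball_L2_set_slice[OF A i p] in \<open>auto simp: C_def\<close>)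
  then have "(\<integral>\<^sup>+ f. indicator {f. L2_set f (insert i A) \<le> 1} f * ennreal (L2_set f A powr p)
      \<partial>Pi\<^sub>M (insert i A) (\<lambda>_. lborel)) =
    (\<integral>\<^sup>+ y. indicator {-1..1} y * ennreal (C * (1 - y\<^sup>2) powr ((card A + p) / 2)) \<partial>lborel)"
    using A i by (subst product_nn_integral_insert_rev) (auto intro: nn_integral_cong_AE)
  also have "\<dots> = (\<integral>\<^sup>+ y. ennreal C *
      (indicator {-1..1} y * ennreal ((1 - y\<^sup>2) powr ((card A + p) / 2))) \<partial>lborel)"
    using C by (intro nn_integral_cong) (simp add: ennreal_mult' mult_ac)
  also have "\<dots> = ennreal (C * Beta (1/2) ((card A + p) / 2 + 1))"
    using p C by (simp add: nn_integral_cmult nn_integral_indicator_powr_one_minus_square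
        ennreal_mult')
  finally show ?thesis
    by (simp add: C_def)
qed

section \<open>The support function of \<open>\<Lambda>\<^sub>p B\<^sup>n\<close>\<close>

lemma omega_eq_unit_ball_vol: "omega s = unit_ball_vol s"
  by (simp add: omega_def unit_ball_vol_def add.commute)

lemma Beta_half_eq_unit_ball_vol_ratio:
  fixes k :: real
  assumes k: "k > 0"
  shows "Beta (1/2) (k/2 + 1) = k / (k + 1) * (unit_ball_vol (k - 1) / unit_ball_vol (k - 2))"
proof -
  have "k/2 \<notin> \<int>\<^sub>\<le>\<^sub>0" "(k + 1)/2 \<notin> \<int>\<^sub>\<le>\<^sub>0"
    using k nonpos_Ints_nonpos by force+
  then have Gamma_step: "Gamma (k/2 + 1) = k/2 * Gamma (k/2)"
    "Gamma (1/2 + (k/2 + 1)) = (k + 1)/2 * Gamma ((k + 1)/2)"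
    using Gamma_plus1[of "k/2"] Gamma_plus1[of "(k + 1)/2"] by (simp_all add: field_simps)
  have Gamma_pos: "Gamma (k/2) > 0" "Gamma ((k + 1)/2) > 0"
    using k by (auto intro!: Gamma_real_pos)
  have "unit_ball_vol (k - 1) = pi powr ((k - 2)/2) * sqrt pi / Gamma ((k + 1)/2)"
  proof -
    have "pi powr ((k - 1)/2) = pi powr ((k - 2)/2) * sqrt pi"
      by (simp add: powr_add[symmetric] powr_half_sqrt[symmetric] field_simps)
    then show ?thesis unfolding unit_ball_vol_def by (simp add: field_simps)
  qed
  moreover have "unit_ball_vol (k - 2) = pi powr ((k - 2)/2) / Gamma (k/2)"
    unfolding unit_ball_vol_def by (simp add: field_simps)
  ultimately have
      "unit_ball_vol (k - 1) / unit_ball_vol (k - 2) = sqrt pi * Gamma (k/2) / Gamma ((k + 1)/2)"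
    using Gamma_pos by simp
  moreover have "Beta (1/2) (k/2 + 1) = k / (k + 1) * (sqrt pi * Gamma (k/2) / Gamma ((k + 1)/2))"
    using k Gamma_pos unfolding Beta_def Gamma_step Gamma_one_half_real by (simp add: field_simps)
  ultimately show ?thesis
    by simp
qed

lemma c_tilde_mult_unit_ball_vol:
  fixes n p :: real
  assumes n: "n \<ge> 2" and p: "p \<ge> 1"
  shows "c_tilde n p * unit_ball_vol n =
    unit_ball_vol (n - 1) * ((n - 1) / (n - 1 + p)) * Beta (1/2) ((n - 1 + p) / 2 + 1)"
proof -
  have "unit_ball_vol n > 0" "unit_ball_vol (n + p - 3) > 0"
    using n p by auto
  moreover have "n + p \<noteq> 0" "n - 1 + p \<noteq> 0"
    using n p by auto
  ultimately have "c_tilde n p * unit_ball_vol n =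
      unit_ball_vol (n - 1) * ((n - 1) / (n - 1 + p)) *
      ((n - 1 + p) / (n + p) * unit_ball_vol (n + p - 2) / unit_ball_vol (n + p - 3))"
    unfolding c_tilde_def omega_eq_unit_ball_vol by (simp add: divide_simps)
  also have "(n - 1 + p) / (n + p) * unit_ball_vol (n + p - 2) / unit_ball_vol (n + p - 3) =
      Beta (1/2) ((n - 1 + p) / 2 + 1)"
    using Beta_half_eq_unit_ball_vol_ratio[of "n - 1 + p"] n p by (simp add: algebra_simps)
  finally show ?thesis .
qed

lemma c_tilde_pos:
  fixes n p :: real
  assumes "n \<ge> 2" and "p \<ge> 1"
  shows "c_tilde n p > 0"
  using assms unfolding c_tilde_def omega_eq_unit_ball_vol
  by (intro divide_pos_pos mult_pos_pos unit_ball_vol_pos) auto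

lemma bracket_nonneg: "bracket x y \<ge> 0"
proof -
  have "\<bar>x \<bullet> y\<bar>\<^sup>2 \<le> (norm x * norm y)\<^sup>2"
    using Cauchy_Schwarz_ineq2 by (intro power_mono) auto
  then show ?thesis
    by (simp add: bracket_def power_mult_distrib)
qed

lemma bracket_scaleR_left: "bracket (c *\<^sub>R x) y = \<bar>c\<bar> * bracket x y"
proof -
  have "(norm (c *\<^sub>R x))\<^sup>2 * (norm y)\<^sup>2 - ((c *\<^sub>R x) \<bullet> y)\<^sup>2 =
      c\<^sup>2 * ((norm x)\<^sup>2 * (norm y)\<^sup>2 - (x \<bullet> y)\<^sup>2)"
    by (simp add: power_mult_distrib algebra_simps)
  then show ?thesis unfolding bracket_def by (simp add: real_sqrt_mult)
qed

lemma bracket_orthogonal_transformation: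
  assumes "orthogonal_transformation T"
  shows "bracket (T x) (T y) = bracket x y"
  using assms by (simp add: bracket_def orthogonal_transformation_norm
      orthogonal_transformation_def)

declare borel_closed[OF closed_cball, measurable]

lemma borel_measurable_bracket [measurable]: "(\<lambda>y. bracket x y) \<in> borel_measurable borel"
  unfolding bracket_def by measurable

lemma nn_integral_cball_bracket_powr_Basis:
  fixes b :: "'a::euclidean_space"
  assumes b: "b \<in> Basis" and p: "p \<ge> 1" and n: "DIM('a) \<ge> 2"
  shows "(\<integral>\<^sup>+ y. indicator (cball 0 1) y * ennreal (bracket b y powr p) \<partial>lborel) =
    ennreal (c_tilde DIM('a) p * unit_ball_vol DIM('a))"
proof -
  define \<phi> where "\<phi> = (\<lambda>f. \<Sum>c\<in>(Basis::'a set). f c *\<^sub>R c)"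
  have [measurable]: "\<phi> \<in> borel_measurable (Pi\<^sub>M Basis (\<lambda>_. lborel))"
    unfolding \<phi>_def by measurable
  have inner_\<phi>: "\<phi> f \<bullet> c = f c" if "c \<in> Basis" for f c
    using that by (simp add: \<phi>_def)
  have norm_\<phi>: "norm (\<phi> f) = L2_set f Basis" for f
  proof -
    have "(norm (\<phi> f))\<^sup>2 = (\<Sum>c\<in>Basis. (\<phi> f \<bullet> c) * (\<phi> f \<bullet> c))"
      by (simp add: power2_norm_eq_inner euclidean_inner[symmetric])
    also have "\<dots> = (\<Sum>c\<in>Basis. (f c)\<^sup>2)"
      by (intro sum.cong) (auto simp: inner_\<phi> power2_eq_square)
    finally show ?thesis
      by (simp add: L2_set_def real_sqrt_unique)
  qed
  have bracket_\<phi>: "bracket b (\<phi> f) = L2_set f (Basis - {b})" for f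
  proof -
    have "(L2_set f Basis)\<^sup>2 = (f b)\<^sup>2 + (L2_set f (Basis - {b}))\<^sup>2"
      using b by (simp add: L2_set_def sum_nonneg sum.remove)
    moreover have "b \<bullet> \<phi> f = f b"
      using inner_\<phi>[OF b] by (simp add: inner_commute)
    ultimately show ?thesis
      using b by (simp add: bracket_def norm_\<phi>)
  qed
  have "(\<integral>\<^sup>+ y. indicator (cball 0 1) y * ennreal (bracket b y powr p) \<partial>lborel) =
      (\<integral>\<^sup>+ f. indicator {f. L2_set f Basis \<le> 1} f * ennreal (L2_set f (Basis - {b}) powr p)
        \<partial>Pi\<^sub>M Basis (\<lambda>_. lborel))"
    by (subst lborel_eq) (simp add: nn_integral_distr \<phi>_def[symmetric] norm_\<phi> bracket_\<phi>
        indicator_def)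
  also have "\<dots> = ennreal (unit_ball_vol (card (Basis - {b})) *
      (card (Basis - {b}) / (card (Basis - {b}) + p)) *
      Beta (1/2) ((card (Basis - {b}) + p) / 2 + 1))"
    using nn_integral_PiM_cball_L2_set_powr_insert[of "Basis - {b}" b p] b p
    by (simp add: insert_absorb)
  also have "\<dots> = ennreal (c_tilde DIM('a) p * unit_ball_vol DIM('a))"
    using b p n c_tilde_mult_unit_ball_vol[of "DIM('a)" p] by (simp add: of_nat_diff)
  finally show ?thesis .
qed

lemma nn_integral_cball_bracket_powr_norm_1:
  fixes x :: "'a::euclidean_space"
  assumes x: "norm x = 1" and p: "p \<ge> 1" and n: "DIM('a) \<ge> 2"
  shows "(\<integral>\<^sup>+ y. indicator (cball 0 1) y * ennreal (bracket x y powr p) \<partial>lborel) =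
    ennreal (c_tilde DIM('a) p * unit_ball_vol DIM('a))"
proof -
  obtain b :: 'a where b: "b \<in> Basis"
    using nonempty_Basis by blast
  obtain T where T: "orthogonal_transformation T" "T b = x"
    using orthogonal_transformation_exists_unit[of b x] b x by auto
  have [measurable]: "T \<in> borel_measurable borel"
    using T(1) orthogonal_transformation_linear linear_borel_measurable by blast
  have "(\<integral>\<^sup>+ y. indicator (cball 0 1) y * ennreal (bracket x y powr p) \<partial>lborel) =
      (\<integral>\<^sup>+ y. indicator (cball 0 1) y * ennreal (bracket x y powr p) \<partial>distr lborel borel T)"
    by (simp add: lborel_distr_orthogonal_transformation[OF T(1)])
  also have "\<dots> =
      (\<integral>\<^sup>+ y. indicator (cball 0 1) (T y) * ennreal (bracket (T b) (T y) powr p) \<partial>lborel)"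
    by (subst nn_integral_distr) (auto simp: T(2))
  also have "\<dots> = (\<integral>\<^sup>+ y. indicator (cball 0 1) y * ennreal (bracket b y powr p) \<partial>lborel)"
    using T(1) by (simp add: bracket_orthogonal_transformation orthogonal_transformation_norm
        indicator_def)
  also have "\<dots> = ennreal (c_tilde DIM('a) p * unit_ball_vol DIM('a))"
    by (rule nn_integral_cball_bracket_powr_Basis[OF b p n])
  finally show ?thesis .
qed

lemma nn_integral_cball_bracket_powr:
  fixes x :: "'a::euclidean_space"
  assumes p: "p \<ge> 1" and n: "DIM('a) \<ge> 2"
  shows "(\<integral>\<^sup>+ y. indicator (cball 0 1) y * ennreal (bracket x y powr p) \<partial>lborel) =
    ennreal (norm x powr p * (c_tilde DIM('a) p * unit_ball_vol DIM('a)))"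
proof (cases "x = 0")
  case True
  then show ?thesis by (simp add: bracket_def)
next
  case False
  define u where "u = x /\<^sub>R norm x"
  have "bracket x y = norm x * bracket u y" for y
    using bracket_scaleR_left[of "norm x" u y] False by (simp add: u_def)
  then have "bracket x y powr p = norm x powr p * bracket u y powr p" for y
    by (simp add: powr_mult bracket_nonneg)
  then have "(\<integral>\<^sup>+ y. indicator (cball 0 1) y * ennreal (bracket x y powr p) \<partial>lborel) =
      ennreal (norm x powr p) *
        (\<integral>\<^sup>+ y. indicator (cball 0 1) y * ennreal (bracket u y powr p) \<partial>lborel)"
    by (subst nn_integral_cmult[symmetric])
      (auto simp: ennreal_mult' mult_ac intro!: nn_integral_cong)
  also have "\<dots> = ennreal (norm x powr p * (c_tilde DIM('a) p * unit_ball_vol DIM('a)))"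
    using False p n by (simp add: u_def nn_integral_cball_bracket_powr_norm_1 ennreal_mult')
  finally show ?thesis .
qed

lemma integral_cball_bracket_powr:
  fixes x :: "'a::euclidean_space"
  assumes p: "p \<ge> 1" and n: "DIM('a) \<ge> 2"
  shows "integral (cball 0 1) (\<lambda>y. bracket x y powr p) =
    norm x powr p * (c_tilde DIM('a) p * unit_ball_vol DIM('a))"
proof -
  have "c_tilde DIM('a) p > 0"
    using c_tilde_pos n p by simp
  moreover have "(\<integral>\<^sup>+ y. ennreal (indicator (cball 0 1) y * bracket x y powr p) \<partial>lborel) =
      ennreal (norm x powr p * (c_tilde DIM('a) p * unit_ball_vol DIM('a)))"
    using nn_integral_cball_bracket_powr[OF p n, of x] by (simp add: indicator_mult_ennreal)
  ultimately have "((\<lambda>y. indicator (cball 0 1) y * bracket x y powr p) has_integral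
      norm x powr p * (c_tilde DIM('a) p * unit_ball_vol DIM('a))) UNIV"
    by (intro nn_integral_has_integral) auto
  then have "((\<lambda>y. if y \<in> cball 0 1 then bracket x y powr p else 0) has_integral
      norm x powr p * (c_tilde DIM('a) p * unit_ball_vol DIM('a))) UNIV"
    by (rule has_integral_eq[rotated]) (simp add: indicator_def)
  then have "((\<lambda>y. bracket x y powr p) has_integral
      norm x powr p * (c_tilde DIM('a) p * unit_ball_vol DIM('a))) (cball 0 1)"
    by (simp only: has_integral_restrict_UNIV)
  then show ?thesis
    by (rule integral_unique)
qed

lemma Lambda_supp_cball:
  fixes x :: "'a::euclidean_space"
  assumes p: "p \<ge> 1" and n: "DIM('a) \<ge> 2"
  shows "Lambda_supp p (cball 0 1) x = norm x"
proof -
  have "c_tilde DIM('a) p \<noteq> 0"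
    using c_tilde_pos[of "DIM('a)" p] n p by auto
  moreover have "unit_ball_vol DIM('a) \<noteq> 0"
    by (metis less_irrefl of_nat_0_le_iff unit_ball_vol_pos)
  ultimately show ?thesis
    using p
    by (simp add: Lambda_supp_def integral_cball_bracket_powr[OF p n] content_cball powr_powr)
qed

lemma unit_cball_eq_halfspaces: "{z. \<forall>x. z \<bullet> x \<le> norm x} = cball (0::'a::real_inner) 1"
proof (intro set_eqI iffI)
  fix z :: 'a
  assume "z \<in> {z. \<forall>x. z \<bullet> x \<le> norm x}"
  then have "z \<bullet> z \<le> norm z"
    by blast
  then have "norm z * norm z \<le> norm z * 1"
    by (simp add: power2_norm_eq_inner[symmetric] power2_eq_square)
  then show "z \<in> cball 0 1"
    by (cases "z = 0") auto
next
  fix z :: 'a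
  assume "z \<in> cball 0 1"
  have "z \<bullet> x \<le> norm x" for x
  proof -
    have "z \<bullet> x \<le> norm z * norm x"
      by (rule norm_cauchy_schwarz)
    also have "\<dots> \<le> norm x"
      using \<open>z \<in> cball 0 1\<close> by (simp add: mult_left_le_one_le)
    finally show ?thesis .
  qed
  then show "z \<in> {z. \<forall>x. z \<bullet> x \<le> norm x}"
    by blast
qed

theorem proposition4p1:
  fixes p :: real
  assumes "p \<ge> 1" and "DIM('a::euclidean_space) \<ge> 2"
  shows "Lambda p (cball (0::'a) 1) = cball 0 1"
proof -
  have "Lambda p (cball (0::'a) 1) = {z. \<forall>x. z \<bullet> x \<le> norm x}"
    unfolding Lambda_def Lambda_supp_cball[OF assms] ..
  also have "\<dots> = cball 0 1"
    by (rule unit_cball_eq_halfspaces)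
  finally show ?thesis .
qed

end
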